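(* Let $n,k$ be integers with $2\le k\le n$, let $\varepsilon\in[0,1)$ and let $\gamma:=\frac{k(n-k)}{2n(n-1)}$. Let $\mathcal{I}=(I_1,\dots,I_m)$ be a finite sequence of $k$-element subsets of $[n]$ such that: (1) for every $i\in[n]$, the fraction $f_{ii}:=\frac{1}{m}|\{\ell\in[m]: i\in I_\ell\}|$ lies in $\left[\frac{k}{n}-\varepsilon\gamma,\frac{k}{n}+\varepsilon\gamma\right]$; (2) for every pair of distinct $i,j\in[n]$, the fraction $f_{ij}:=\frac{1}{m}|\{\ell\in[m]: \{i,j\}\subseteq I_\ell\}|$ lies in $\left[\frac{k(k-1)}{n(n-1)}-\varepsilon\gamma,\frac{k(k-1)}{n(n-1)}+\varepsilon\gamma\right]$. Then there is a scaling $\alpha>0$ such that for all matrices $M\in\mathbb{R}^{n\times n}$, $$\|M-\alpha\,T_{\mathcal{I}}(M)\|_F\le(1+\varepsilon)\frac{n-k}{n+k-2}\|M\|_F.$$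
   Context: For $M\in\mathbb{R}^{n\times n}$ and $I\subseteq[n]$, $M^I$ denotes the $n\times n$ matrix obtained from $M$ by setting to zero all entries outside rows and columns indexed by $I$ (i.e. $(M^I)_{ij}=M_{ij}$ if $i,j\in I$ and $0$ otherwise). The partial averaging operator is $T_{\mathcal{I}}(M):=\frac{1}{m}\sum_{\ell=1}^m M^{I_\ell}$ (the sum taken over the sequence, with multiplicity). $\|\cdot\|_F$ is the Frobenius norm. *)

theory Defs
  imports Complex_Main
begin

text \<open>n x n real matrices are represented as functions nat => nat => real; only
entries with indices in {0..<n} (our rendering of [n]) matter.\<close>

definition restr :: "(nat \<Rightarrow> nat \<Rightarrow> real) \<Rightarrow> nat set \<Rightarrow> (nat \<Rightarrow> nat \<Rightarrow> real)" where
  "restr M I = (\<lambda>i j. if i \<in> I \<and> j \<in> I then M i j else 0)"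

definition T_avg :: "nat set list \<Rightarrow> (nat \<Rightarrow> nat \<Rightarrow> real) \<Rightarrow> (nat \<Rightarrow> nat \<Rightarrow> real)" where
  "T_avg Is M = (\<lambda>i j. (1 / real (length Is)) * (\<Sum>l<length Is. restr M (Is ! l) i j))"

definition frob :: "nat \<Rightarrow> (nat \<Rightarrow> nat \<Rightarrow> real) \<Rightarrow> real" where
  "frob n M = sqrt (\<Sum>i<n. \<Sum>j<n. (M i j)^2)"

definition freq1 :: "nat set list \<Rightarrow> nat \<Rightarrow> real" where
  "freq1 Is i = real (card {l. l < length Is \<and> i \<in> Is ! l}) / real (length Is)"

definition freq2 :: "nat set list \<Rightarrow> nat \<Rightarrow> nat \<Rightarrow> real" where
  "freq2 Is i j = real (card {l. l < length Is \<and> {i, j} \<subseteq> Is ! l}) / real (length Is)"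

end

theory Submission
  imports Defs
begin

text \<open>The operator \<open>T\<^sub>\<I>\<close> acts entrywise: it multiplies the entry \<open>(i, j)\<close> by the
co-occurrence frequency \<open>f\<^sub>i\<^sub>j\<close> of \<open>i\<close> and \<open>j\<close> in the sequence. Hence \<open>M - \<alpha> T\<^sub>\<I>(M)\<close>
is the entrywise product of \<open>M\<close> with the multiplier \<open>1 - \<alpha> f\<^sub>i\<^sub>j\<close>, and its Frobenius norm
is at most \<open>max\<^sub>i\<^sub>j \<bar>1 - \<alpha> f\<^sub>i\<^sub>j\<bar>\<close> times that of \<open>M\<close>. For \<open>\<alpha> = 2n(n-1)/(k(n+k-2))\<close> the
ideal frequencies \<open>k/n\<close> and \<open>k(k-1)/(n(n-1))\<close> give the multipliers \<open>\<mp>(n-k)/(n+k-2)\<close>,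
and a deviation of at most \<open>\<epsilon>\<gamma>\<close> in a frequency changes the multiplier by at most
\<open>\<alpha>\<epsilon>\<gamma> = \<epsilon>(n-k)/(n+k-2)\<close>.\<close>

definition cofreq :: "nat set list \<Rightarrow> nat \<Rightarrow> nat \<Rightarrow> real" where
  "cofreq Is i j = real (card {l. l < length Is \<and> i \<in> Is ! l \<and> j \<in> Is ! l}) / real (length Is)"

lemma freq1_eq_cofreq: "freq1 Is i = cofreq Is i i"
  by (simp add: freq1_def cofreq_def)

lemma freq2_eq_cofreq: "freq2 Is i j = cofreq Is i j"
  by (simp add: freq2_def cofreq_def)

lemma T_avg_eq_cofreq: "T_avg Is M i j = cofreq Is i j * M i j"
proof -
  have "(\<Sum>l<length Is. restr M (Is ! l) i j)
      = (\<Sum>l\<in>{l. l < length Is \<and> i \<in> Is ! l \<and> j \<in> Is ! l}. M i j)"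
    unfolding restr_def by (simp add: sum.If_cases Int_def conj_commute)
  then show ?thesis
    by (simp add: T_avg_def cofreq_def)
qed

lemma frob_entrywise_mult_le:
  assumes "0 \<le> c" and "\<And>i j. i < n \<Longrightarrow> j < n \<Longrightarrow> \<bar>h i j\<bar> \<le> c"
  shows "frob n (\<lambda>i j. h i j * M i j) \<le> c * frob n M"
proof -
  have "(\<Sum>i<n. \<Sum>j<n. (h i j * M i j)^2) \<le> (\<Sum>i<n. \<Sum>j<n. c^2 * (M i j)^2)"
  proof (intro sum_mono)
    fix i j assume "i \<in> {..<n}" "j \<in> {..<n}"
    then have "\<bar>h i j\<bar>^2 \<le> c^2"
      using assms by (intro power_mono) auto
    then show "(h i j * M i j)^2 \<le> c^2 * (M i j)^2"
      by (simp add: power_mult_distrib mult_right_mono)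
  qed
  then have "frob n (\<lambda>i j. h i j * M i j) \<le> sqrt (c^2 * (\<Sum>i<n. \<Sum>j<n. (M i j)^2))"
    by (simp add: frob_def sum_distrib_left)
  also have "\<dots> = c * frob n M"
    using assms(1) by (simp add: real_sqrt_mult frob_def)
  finally show ?thesis .
qed

lemma abs_one_minus_mult_perturb_le:
  fixes \<alpha> \<gamma> \<epsilon> a x c :: real
  assumes "0 \<le> \<alpha>" and "\<alpha> * \<gamma> = c"
    and "\<bar>1 - \<alpha> * a\<bar> \<le> c" and "\<bar>x - a\<bar> \<le> \<epsilon> * \<gamma>"
  shows "\<bar>1 - \<alpha> * x\<bar> \<le> (1 + \<epsilon>) * c"
proof -
  have "\<bar>\<alpha> * (x - a)\<bar> \<le> \<alpha> * (\<epsilon> * \<gamma>)"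
    using assms(1,4) by (simp add: abs_mult mult_left_mono)
  also have "\<dots> = \<epsilon> * c"
    using assms(2) by (metis mult.left_commute)
  finally have "\<bar>\<alpha> * (x - a)\<bar> \<le> \<epsilon> * c" .
  moreover have "1 - \<alpha> * x = (1 - \<alpha> * a) - \<alpha> * (x - a)"
    by (simp add: algebra_simps)
  ultimately show ?thesis
    using assms(3) by (simp add: algebra_simps)
qed

lemma averaging_scale_identities:
  fixes n k :: real
  assumes "1 < n" and "0 < k" and "0 < n + k - 2"
  defines "\<alpha> \<equiv> 2 * n * (n - 1) / (k * (n + k - 2))"
  shows "1 - \<alpha> * (k / n) = - ((n - k) / (n + k - 2))"
    and "1 - \<alpha> * (k * (k - 1) / (n * (n - 1))) = (n - k) / (n + k - 2)"
    and "\<alpha> * (k * (n - k) / (2 * n * (n - 1))) = (n - k) / (n + k - 2)"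
  using assms unfolding \<alpha>_def by (simp_all add: divide_simps)

theorem lemma8:
  fixes n k :: nat and \<epsilon> :: real and Is :: "nat set list"
  assumes "2 \<le> k" and "k \<le> n"
    and "0 \<le> \<epsilon>" and "\<epsilon> < 1"
    and "\<forall>l < length Is. Is ! l \<subseteq> {0..<n} \<and> card (Is ! l) = k"
    and "\<forall>i < n. \<bar>freq1 Is i - real k / real n\<bar>
            \<le> \<epsilon> * (real k * (real n - real k) / (2 * real n * (real n - 1)))"
    and "\<forall>i < n. \<forall>j < n. i \<noteq> j \<longrightarrow>
            \<bar>freq2 Is i j - real k * (real k - 1) / (real n * (real n - 1))\<bar>
            \<le> \<epsilon> * (real k * (real n - real k) / (2 * real n * (real n - 1)))"
  shows "\<exists>\<alpha>>0. \<forall>M :: nat \<Rightarrow> nat \<Rightarrow> real.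
           frob n (\<lambda>i j. M i j - \<alpha> * T_avg Is M i j)
             \<le> (1 + \<epsilon>) * ((real n - real k) / (real n + real k - 2)) * frob n M"
proof -
  define \<alpha> where "\<alpha> = 2 * real n * (real n - 1) / (real k * (real n + real k - 2))"
  define c where "c = (real n - real k) / (real n + real k - 2)"
  define \<gamma> where "\<gamma> = real k * (real n - real k) / (2 * real n * (real n - 1))"
  have nk: "1 < real n" "0 < real k" "0 < real n + real k - 2" "0 \<le> c"
    using assms(1,2) by (auto simp: c_def)
  have "0 < \<alpha>"
    using nk by (simp add: \<alpha>_def)
  note ideal = averaging_scale_identities[OF nk(1-3), folded \<alpha>_def c_def \<gamma>_def]
  have multiplier: "\<bar>1 - \<alpha> * cofreq Is i j\<bar> \<le> (1 + \<epsilon>) * c" if "i < n" "j < n" for i j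
  proof (cases "i = j")
    case True
    then show ?thesis
      using assms(6) that ideal(1,3) nk(4) \<open>0 < \<alpha>\<close>
      by (intro abs_one_minus_mult_perturb_le[where a = "real k / real n" and \<gamma> = \<gamma>])
        (auto simp: freq1_eq_cofreq \<gamma>_def)
  next
    case False
    then show ?thesis
      using assms(7) that ideal(2,3) nk(4) \<open>0 < \<alpha>\<close>
      by (intro abs_one_minus_mult_perturb_le[where a = "real k * (real k - 1) / (real n * (real n - 1))" and \<gamma> = \<gamma>])
        (auto simp: freq2_eq_cofreq \<gamma>_def)
  qed
  have "frob n (\<lambda>i j. M i j - \<alpha> * T_avg Is M i j) \<le> (1 + \<epsilon>) * c * frob n M" for M
    using frob_entrywise_mult_le[of "(1 + \<epsilon>) * c" n "\<lambda>i j. 1 - \<alpha> * cofreq Is i j" M]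
      multiplier assms(3) nk(4)
    by (simp add: T_avg_eq_cofreq left_diff_distrib mult.assoc)
  then show ?thesis
    using \<open>0 < \<alpha>\<close> by (auto simp: c_def)
qed

end
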